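(* Every financial system with payment priorities (as defined in the context, for any number $P\ge 1$ of priority levels) has at least one solution, i.e. there exists $r\in[0,1]^V$ such that for every bank $v\in V$: $r_v=1$ if $a_v(r)\ge l_v(r)$, and $r_v=a_v(r)/l_v(r)$ if $a_v(r)<l_v(r)$.
   Context: A financial system with payment priorities consists of: a finite set $V$ of banks; external assets $e_v\ge 0$ for each $v\in V$; a number $P\ge 1$ of priority levels; and a finite set of contracts, each of which is either a debt contract from a debtor $u$ to a creditor $v\neq u$ with weight $c>0$, or a credit default swap (CDS) from a debtor $u$ to a creditor $v\neq u$ in reference to a bank $w\notin\{u,v\}$ (the reference entity) with weight $c>0$. Every contract has a priority in $\{1,\dots,P\}$ (1 is the highest priority). It is assumed that every bank that is the reference entity of some CDS is the debtor of at least one debt contract of positive weight. Given a recovery rate vector $r\in[0,1]^V$: the liability of a contract $k$ is $l_k(r)=c$ if $k$ is a debt of weight $c$, and $l_k(r)=c\,(1-r_w)$ if $k$ is a CDS of weight $c$ in reference to $w$. For a bank $v$, $l_v(r)$ is the sum of the liabilities of the contracts with debtor $v$; $l_v^{(\rho)}(r)$ is the sum of the liabilities of contracts with debtor $v$ and priority $\rho$; and $l_v^{(\le\rho)}(r)=\sum_{i=1}^{\rho}l_v^{(i)}(r)$ (with $l_v^{(\le 0)}=0$). The payment on a contract $k$ with debtor $v$ and priority $\rho$ is $p_k(r)=l_k(r)\cdot\min\{1,\max\{0,(r_v l_v(r)-l_v^{(\le\rho-1)}(r))/l_v^{(\rho)}(r)\}\}$ (and $p_k(r)=0$ if $l_v^{(\rho)}(r)=0$);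 i.e. the amount $r_v l_v(r)$ paid out by $v$ covers liabilities level by level in order of priority, proportionally to liabilities within a level. The assets of $v$ are $a_v(r)=e_v+\sum_k p_k(r)$, summing over contracts $k$ with creditor $v$. A vector $r\in[0,1]^V$ is a solution (clearing vector) if for every $v\in V$: $r_v=1$ when $a_v(r)\ge l_v(r)$, and $r_v=a_v(r)/l_v(r)$ when $a_v(r)<l_v(r)$. The payoff of $v$ is $q_v(r)=\max\{a_v(r)-l_v(r),0\}$. When $P=1$, payments reduce to $p_k(r)=r_v\,l_k(r)$ (principle of proportionality); this is called the base model. *)

theory Defs
  imports Complex_Main
begin

text \<open>A contract is either a debt contract (debtor, creditor, weight, priority)
  or a CDS (debtor, creditor, reference entity, weight, priority).
  The contracts of a system form a finite list (so that several contracts with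
  identical data are allowed).\<close>

datatype 'b contract =
    Debt 'b 'b real nat
  | CDS 'b 'b 'b real nat

fun debtor :: "'b contract \<Rightarrow> 'b" where
  "debtor (Debt u v c p) = u"
| "debtor (CDS u v w c p) = u"

fun creditor :: "'b contract \<Rightarrow> 'b" where
  "creditor (Debt u v c p) = v"
| "creditor (CDS u v w c p) = v"

fun cweight :: "'b contract \<Rightarrow> real" where
  "cweight (Debt u v c p) = c"
| "cweight (CDS u v w c p) = c"

fun prio :: "'b contract \<Rightarrow> nat" where
  "prio (Debt u v c p) = p"
| "prio (CDS u v w c p) = p"

definition wf_system :: "'b set \<Rightarrow> ('b \<Rightarrow> real) \<Rightarrow> nat \<Rightarrow> 'b contract list \<Rightarrow> bool" where
  "wf_system V e P cs \<longleftrightarrow>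
     finite V \<and> (\<forall>v\<in>V. e v \<ge> 0) \<and> P \<ge> 1 \<and>
     (\<forall>k\<in>set cs. debtor k \<in> V \<and> creditor k \<in> V \<and> debtor k \<noteq> creditor k \<and>
        cweight k > 0 \<and> 1 \<le> prio k \<and> prio k \<le> P) \<and>
     (\<forall>u v w c p. CDS u v w c p \<in> set cs \<longrightarrow> w \<in> V \<and> w \<noteq> u \<and> w \<noteq> v \<and>
        (\<exists>v' c' p'. Debt w v' c' p' \<in> set cs \<and> c' > 0))"

fun liab :: "'b contract \<Rightarrow> ('b \<Rightarrow> real) \<Rightarrow> real" where
  "liab (Debt u v c p) r = c"
| "liab (CDS u v w c p) r = c * (1 - r w)"

definition bank_liab :: "'b contract list \<Rightarrow> 'b \<Rightarrow> ('b \<Rightarrow> real) \<Rightarrow> real" where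
  "bank_liab cs v r = sum_list (map (\<lambda>k. if debtor k = v then liab k r else 0) cs)"

definition bank_liab_prio :: "'b contract list \<Rightarrow> 'b \<Rightarrow> nat \<Rightarrow> ('b \<Rightarrow> real) \<Rightarrow> real" where
  "bank_liab_prio cs v \<rho> r =
     sum_list (map (\<lambda>k. if debtor k = v \<and> prio k = \<rho> then liab k r else 0) cs)"

definition bank_liab_upto :: "'b contract list \<Rightarrow> 'b \<Rightarrow> nat \<Rightarrow> ('b \<Rightarrow> real) \<Rightarrow> real" where
  "bank_liab_upto cs v \<rho> r = (\<Sum>i=1..\<rho>. bank_liab_prio cs v i r)"

definition payment :: "'b contract list \<Rightarrow> 'b contract \<Rightarrow> ('b \<Rightarrow> real) \<Rightarrow> real" where
  "payment cs k r =
     (let v = debtor k; \<rho> = prio k; L = bank_liab_prio cs v \<rho> r in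
      if L = 0 then 0
      else liab k r * min 1 (max 0 ((r v * bank_liab cs v r - bank_liab_upto cs v (\<rho> - 1) r) / L)))"

definition assets :: "('b \<Rightarrow> real) \<Rightarrow> 'b contract list \<Rightarrow> 'b \<Rightarrow> ('b \<Rightarrow> real) \<Rightarrow> real" where
  "assets e cs v r = e v + sum_list (map (\<lambda>k. if creditor k = v then payment cs k r else 0) cs)"

definition is_solution :: "'b set \<Rightarrow> ('b \<Rightarrow> real) \<Rightarrow> 'b contract list \<Rightarrow> ('b \<Rightarrow> real) \<Rightarrow> bool" where
  "is_solution V e cs r \<longleftrightarrow>
     (\<forall>v\<in>V. 0 \<le> r v \<and> r v \<le> 1) \<and>
     (\<forall>v\<in>V. (assets e cs v r \<ge> bank_liab cs v r \<longrightarrow> r v = 1) \<and>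
            (assets e cs v r < bank_liab cs v r \<longrightarrow> r v = assets e cs v r / bank_liab cs v r))"

end

theory Submission
  imports Defs "HOL-Analysis.Analysis"
begin

text \<open>A clearing vector comes from Brouwer's fixed point theorem.  The naive map
  \<open>r \<mapsto> min 1 (a\<^sub>v(r) / l\<^sub>v(r))\<close> is discontinuous where a bank has no liabilities, so the
  coordinates of the map are recovery rates only for the reference entities of CDSs, whose
  liabilities are positive, and payout fractions for all other banks; the map lets each bank pay out
  \<open>min(assets, liabilities)\<close>.  Payments under priorities depend continuously on the payouts,
  because each priority level is paid proportionally.  At a fixed point, dividing payouts by
  liabilities gives a solution.  Brouwer's theorem for the cube \<open>[0,1]\<^sup>V\<close> follows from Kuhn's
  lemma on \<open>[0,1]\<^sup>n\<close>: meshes of fully labelled cells shrink to a point that the map fixes.\<close>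

definition unit_cube :: "'i set \<Rightarrow> ('i \<Rightarrow> real) set" where
  "unit_cube I = {x. \<forall>i. x i \<in> (if i \<in> I then {0..1} else {0})}"

lemma mem_unit_cube:
  "x \<in> unit_cube I \<longleftrightarrow> (\<forall>i\<in>I. 0 \<le> x i \<and> x i \<le> 1) \<and> (\<forall>i. i \<notin> I \<longrightarrow> x i = 0)"
  unfolding unit_cube_def by (auto split: if_splits)

lemma compact_unit_cube: "compact (unit_cube I)"
proof -
  have "unit_cube I = PiE UNIV (\<lambda>i. if i \<in> I then {0..1} else {0})"
    by (auto simp: unit_cube_def PiE_def Pi_def)
  moreover have "compactin (product_topology (\<lambda>_. euclidean) UNIV)
      (PiE UNIV (\<lambda>i. if i \<in> I then {0..1::real} else {0}))"
    by (simp add: compactin_PiE)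
  ultimately show ?thesis
    by (metis compactin_euclidean_iff euclidean_product_topology)
qed

lemma tendsto_fun_iff_coordinatewise:
  fixes f :: "'a \<Rightarrow> 'i \<Rightarrow> 'b::topological_space"
  shows "(f \<longlongrightarrow> l) F \<longleftrightarrow> (\<forall>i. ((\<lambda>k. f k i) \<longlongrightarrow> l i) F)"
  using limitin_componentwise[of "\<lambda>_. euclidean" UNIV f l F]
  unfolding euclidean_product_topology by simp

lemma tendsto_fun_apply:
  fixes f :: "'a \<Rightarrow> 'i \<Rightarrow> 'b::topological_space"
  shows "(f \<longlongrightarrow> l) F \<Longrightarrow> ((\<lambda>k. f k i) \<longlongrightarrow> l i) F"
  using tendsto_fun_iff_coordinatewise[of f l F] by blast

lemma tendsto_fun_approx:
  fixes z a :: "nat \<Rightarrow> 'i \<Rightarrow> real"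
  assumes "z \<longlonglongrightarrow> l" and "d \<longlonglongrightarrow> 0" and "\<And>k i. \<bar>a k i - z k i\<bar> \<le> d k"
  shows "a \<longlonglongrightarrow> l"
proof (rule tendsto_fun_iff_coordinatewise[THEN iffD2], rule allI)
  fix i
  have "(\<lambda>k. a k i - z k i) \<longlonglongrightarrow> 0"
    using assms(3) by (intro Lim_null_comparison[OF _ assms(2)] always_eventually) simp
  moreover have "(\<lambda>k. z k i) \<longlonglongrightarrow> l i"
    using assms(1) by (rule tendsto_fun_apply)
  ultimately have "(\<lambda>k. (a k i - z k i) + z k i) \<longlonglongrightarrow> 0 + l i"
    by (rule tendsto_add)
  then show "(\<lambda>k. a k i) \<longlonglongrightarrow> l i"
    by simp
qed

lemma fixed_coordinate_of_opposite_displacements: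
  fixes f :: "('i \<Rightarrow> real) \<Rightarrow> 'i \<Rightarrow> real"
  assumes cont: "continuous_on C f" and x: "x \<in> C"
    and a: "\<And>k. a k \<in> C" and b: "\<And>k. b k \<in> C"
    and a_lim: "a \<longlonglongrightarrow> x" and b_lim: "b \<longlonglongrightarrow> x"
    and opposite: "\<And>k. (a k i - f (a k) i) * (b k i - f (b k) i) \<le> 0"
  shows "f x i = x i"
proof -
  have "(\<lambda>k. f (a k)) \<longlonglongrightarrow> f x" "(\<lambda>k. f (b k)) \<longlonglongrightarrow> f x"
    using a b by (intro continuous_on_tendsto_compose[OF cont _ x] a_lim b_lim always_eventually; simp)+
  then have "(\<lambda>k. (a k i - f (a k) i) * (b k i - f (b k) i)) \<longlonglongrightarrow> (x i - f x i) * (x i - f x i)"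
    using tendsto_fun_apply[OF a_lim] tendsto_fun_apply[OF b_lim]
      tendsto_fun_apply[of "\<lambda>k. f (a k)"] tendsto_fun_apply[of "\<lambda>k. f (b k)"]
    by (intro tendsto_mult tendsto_diff) blast+
  then have "(x i - f x i) * (x i - f x i) \<le> 0"
    using opposite by (intro LIMSEQ_le_const2) auto
  then show ?thesis
    by (auto simp: mult_le_0_iff)
qed

lemma kuhn_labelled_cell:
  fixes label :: "(nat \<Rightarrow> real) \<Rightarrow> nat \<Rightarrow> nat" and p :: nat
  assumes "0 < p"
    and label_le: "\<And>x i. label x i \<le> 1"
    and label_0: "\<And>x i. x \<in> unit_cube {..<n} \<Longrightarrow> i < n \<Longrightarrow> x i = 0 \<Longrightarrow> label x i = 0"
    and label_1: "\<And>x i. x \<in> unit_cube {..<n} \<Longrightarrow> i < n \<Longrightarrow> x i = 1 \<Longrightarrow> label x i = 1"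
  obtains z where "z \<in> unit_cube {..<n}"
    and "\<And>i. i < n \<Longrightarrow> \<exists>a\<in>unit_cube {..<n}. \<exists>b\<in>unit_cube {..<n}.
           (\<forall>j. \<bar>a j - z j\<bar> \<le> 1 / p) \<and> (\<forall>j. \<bar>b j - z j\<bar> \<le> 1 / p) \<and> label a i \<noteq> label b i"
proof -
  define grid where "grid y = (\<lambda>j. if j < n then real (y j) / real p else 0)" for y :: "nat \<Rightarrow> nat"
  have grid_cube: "grid y \<in> unit_cube {..<n}" if "\<forall>j<n. y j \<le> p" for y
    using that assms(1) by (auto simp: grid_def mem_unit_cube)
  have grid_close: "\<bar>grid y j - grid q j\<bar> \<le> 1 / p"
    if "\<forall>j<n. q j \<le> y j \<and> y j \<le> q j + 1" for y q j
  proof (cases "j < n")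
    case True
    then have "0 \<le> real (y j) - real (q j)" "real (y j) - real (q j) \<le> 1"
      using that by auto
    then show ?thesis
      using True by (simp add: grid_def diff_divide_distrib[symmetric] divide_right_mono)
  qed (simp add: grid_def)
  obtain q where q: "\<forall>i<n. q i < p"
    and cells: "\<forall>i<n. \<exists>r s. (\<forall>j<n. q j \<le> r j \<and> r j \<le> q j + 1) \<and>
                   (\<forall>j<n. q j \<le> s j \<and> s j \<le> q j + 1) \<and> label (grid r) i \<noteq> label (grid s) i"
  proof (rule kuhn_lemma[of p n "\<lambda>y i. label (grid y) i"])
    show "\<forall>y. (\<forall>i<n. y i \<le> p) \<longrightarrow> (\<forall>i<n. label (grid y) i = 0 \<or> label (grid y) i = 1)"
      using label_le by (metis le_neq_implies_less less_one)
    show "\<forall>y. (\<forall>i<n. y i \<le> p) \<longrightarrow> (\<forall>i<n. y i = 0 \<longrightarrow> label (grid y) i = 0)"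
      using label_0 grid_cube by (simp add: grid_def)
    show "\<forall>y. (\<forall>i<n. y i \<le> p) \<longrightarrow> (\<forall>i<n. y i = p \<longrightarrow> label (grid y) i = 1)"
      using label_1 grid_cube assms(1) by (simp add: grid_def)
  qed (use assms(1) in auto)
  show ?thesis
  proof (rule that[of "grid q"])
    show "grid q \<in> unit_cube {..<n}"
      using q by (intro grid_cube) (simp add: less_imp_le)
    fix i assume "i < n"
    then obtain r s where rs: "\<forall>j<n. q j \<le> r j \<and> r j \<le> q j + 1" "\<forall>j<n. q j \<le> s j \<and> s j \<le> q j + 1"
      and "label (grid r) i \<noteq> label (grid s) i"
      using cells by blast
    moreover have "r j \<le> p \<and> s j \<le> p" if "j < n" for j
    proof -
      have "q j < p" "r j \<le> q j + 1" "s j \<le> q j + 1"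
        using rs q that by auto
      then show ?thesis by linarith
    qed
    then have "grid r \<in> unit_cube {..<n}" "grid s \<in> unit_cube {..<n}"
      by (auto intro: grid_cube)
    ultimately show "\<exists>a\<in>unit_cube {..<n}. \<exists>b\<in>unit_cube {..<n}.
           (\<forall>j. \<bar>a j - grid q j\<bar> \<le> 1 / p) \<and> (\<forall>j. \<bar>b j - grid q j\<bar> \<le> 1 / p) \<and> label a i \<noteq> label b i"
      using grid_close by blast
  qed
qed

lemma brouwer_unit_cube_nat:
  fixes f :: "(nat \<Rightarrow> real) \<Rightarrow> nat \<Rightarrow> real"
  assumes cont: "continuous_on (unit_cube {..<n}) f"
    and into: "f ` unit_cube {..<n} \<subseteq> unit_cube {..<n}"
  shows "\<exists>x\<in>unit_cube {..<n}. f x = x"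
proof -
  let ?C = "unit_cube {..<n}"
  have "\<forall>x. x \<in> ?C \<longrightarrow> f x \<in> ?C"
    using into by blast
  moreover have "\<forall>x. x \<in> ?C \<longrightarrow> (\<forall>i. i < n \<longrightarrow> 0 \<le> x i \<and> x i \<le> 1)"
    by (simp add: mem_unit_cube)
  ultimately obtain label :: "(nat \<Rightarrow> real) \<Rightarrow> nat \<Rightarrow> nat" where
        label_le: "\<forall>x i. label x i \<le> 1"
    and label_0: "\<forall>x i. x \<in> ?C \<and> i < n \<and> x i = 0 \<longrightarrow> label x i = 0"
    and label_1: "\<forall>x i. x \<in> ?C \<and> i < n \<and> x i = 1 \<longrightarrow> label x i = 1"
    and up: "\<forall>x i. x \<in> ?C \<and> i < n \<and> label x i = 0 \<longrightarrow> x i \<le> f x i"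
    and down: "\<forall>x i. x \<in> ?C \<and> i < n \<and> label x i = 1 \<longrightarrow> f x i \<le> x i"
    using kuhn_labelling_lemma'[of "\<lambda>x. x \<in> ?C" f "\<lambda>i. i < n"] by blast
  have opposite: "(y i - f y i) * (y' i - f y' i) \<le> 0"
    if "y \<in> ?C" "y' \<in> ?C" "i < n" "label y i \<noteq> label y' i" for y y' i
  proof -
    have "label y i = 0 \<and> label y' i = 1 \<or> label y i = 1 \<and> label y' i = 0"
      using label_le that(4) by (metis le_neq_implies_less less_one)
    then show ?thesis
      using up down that by (auto simp: mult_nonneg_nonpos mult_nonpos_nonneg)
  qed
  have "\<exists>z. \<forall>k. z k \<in> ?C \<and> (\<forall>i<n. \<exists>a\<in>?C. \<exists>b\<in>?C. (\<forall>j. \<bar>a j - z k j\<bar> \<le> 1 / Suc k) \<and>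
      (\<forall>j. \<bar>b j - z k j\<bar> \<le> 1 / Suc k) \<and> label a i \<noteq> label b i)"
  proof (rule choice, rule allI)
    fix k
    show "\<exists>z. z \<in> ?C \<and> (\<forall>i<n. \<exists>a\<in>?C. \<exists>b\<in>?C. (\<forall>j. \<bar>a j - z j\<bar> \<le> 1 / Suc k) \<and>
      (\<forall>j. \<bar>b j - z j\<bar> \<le> 1 / Suc k) \<and> label a i \<noteq> label b i)"
      by (rule kuhn_labelled_cell[of "Suc k" label n]) (use label_le label_0 label_1 in auto)
  qed
  then obtain z where z: "\<And>k. z k \<in> ?C"
    and cell: "\<And>k i. i < n \<Longrightarrow> \<exists>a\<in>?C. \<exists>b\<in>?C. (\<forall>j. \<bar>a j - z k j\<bar> \<le> 1 / Suc k) \<and>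
      (\<forall>j. \<bar>b j - z k j\<bar> \<le> 1 / Suc k) \<and> label a i \<noteq> label b i"
    by blast
  obtain x \<sigma> where x: "x \<in> ?C" and \<sigma>: "strict_mono \<sigma>" and lim: "(z \<circ> \<sigma>) \<longlonglongrightarrow> x"
    using seq_compactE[OF compact_imp_seq_compact[OF compact_unit_cube]] z by blast
  have mesh: "(\<lambda>k. 1 / real (Suc (\<sigma> k))) \<longlonglongrightarrow> 0"
    using LIMSEQ_subseq_LIMSEQ[OF LIMSEQ_inverse_real_of_nat \<sigma>] by (simp add: o_def inverse_eq_divide)
  have "f x i = x i" if i: "i < n" for i
  proof -
    define cell_at where "cell_at k a b \<longleftrightarrow> a \<in> ?C \<and> b \<in> ?C \<and>
      (\<forall>j. \<bar>a j - z k j\<bar> \<le> 1 / Suc k) \<and> (\<forall>j. \<bar>b j - z k j\<bar> \<le> 1 / Suc k) \<and> label a i \<noteq> label b i"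
      for k a b
    have "\<exists>a. \<forall>k. \<exists>b. cell_at k (a k) b"
      using cell[OF i] unfolding cell_at_def by (intro choice) blast
    then obtain a where "\<forall>k. \<exists>b. cell_at k (a k) b"
      by blast
    then obtain b where "\<forall>k. cell_at k (a k) (b k)"
      by (metis choice)
    then have ab: "\<And>k. a k \<in> ?C" "\<And>k. b k \<in> ?C"
      "\<And>k j. \<bar>a k j - z k j\<bar> \<le> 1 / Suc k" "\<And>k j. \<bar>b k j - z k j\<bar> \<le> 1 / Suc k"
      "\<And>k. label (a k) i \<noteq> label (b k) i"
      unfolding cell_at_def by blast+
    show ?thesis
    proof (rule fixed_coordinate_of_opposite_displacements[OF cont x])
      show "(a \<circ> \<sigma>) k \<in> ?C" "(b \<circ> \<sigma>) k \<in> ?C" for k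
        using ab(1,2) by simp_all
      show "(a \<circ> \<sigma>) \<longlonglongrightarrow> x"
        by (rule tendsto_fun_approx[OF lim mesh]) (unfold o_def, rule ab(3))
      show "(b \<circ> \<sigma>) \<longlonglongrightarrow> x"
        by (rule tendsto_fun_approx[OF lim mesh]) (unfold o_def, rule ab(4))
      show "((a \<circ> \<sigma>) k i - f ((a \<circ> \<sigma>) k) i) * ((b \<circ> \<sigma>) k i - f ((b \<circ> \<sigma>) k) i) \<le> 0" for k
        unfolding o_def by (rule opposite[OF ab(1,2) i ab(5)])
    qed
  qed
  moreover have "f x i = x i" if "\<not> i < n" for i
  proof -
    have "f x \<in> ?C"
      using into x by blast
    then show ?thesis
      using x that by (simp add: mem_unit_cube)
  qed
  ultimately have "f x = x"
    by blast
  with x show ?thesis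
    by blast
qed

lemma unit_cube_homeomorphic_nat:
  assumes "finite I"
  shows "unit_cube {..<card I} homeomorphic unit_cube I"
proof -
  define n where "n = card I"
  obtain h where h: "bij_betw h {..<n} I"
    using ex_bij_betw_nat_finite[OF assms] by (auto simp: n_def atLeast0LessThan)
  define idx where "idx = inv_into {..<n} h"
  have h_idx: "h (idx v) = v" and idx_less: "idx v < n" if "v \<in> I" for v
    using that h bij_betw_inv_into_right[OF h] bij_betwE[OF bij_betw_inv_into[OF h]]
    unfolding idx_def by auto
  have idx_h: "idx (h j) = j" and h_in: "h j \<in> I" if "j < n" for j
    using that h bij_betw_inv_into_left[OF h] bij_betwE[OF h] unfolding idx_def by auto
  define push :: "(nat \<Rightarrow> real) \<Rightarrow> 'a \<Rightarrow> real" where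
    "push y = (\<lambda>v. if v \<in> I then y (idx v) else 0)" for y
  define pull :: "('a \<Rightarrow> real) \<Rightarrow> nat \<Rightarrow> real" where
    "pull x = (\<lambda>j. if j < n then x (h j) else 0)" for x
  have "homeomorphism (unit_cube {..<n}) (unit_cube I) push pull"
  proof (rule homeomorphismI)
    have coordinate: "continuous_on S (\<lambda>x. if P then x j else 0)" for S P and j :: 'b
      by (cases P) (simp_all add: continuous_on_subset[OF continuous_on_product_coordinates])
    show "continuous_on (unit_cube {..<n}) push"
      unfolding push_def by (intro continuous_on_coordinatewise_then_product) (simp add: coordinate continuous_on_const)
    show "continuous_on (unit_cube I) pull"
      unfolding pull_def by (intro continuous_on_coordinatewise_then_product) (simp add: coordinate continuous_on_const)
    show "push ` unit_cube {..<n} \<subseteq> unit_cube I" "pull ` unit_cube I \<subseteq> unit_cube {..<n}"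
      using idx_less h_in by (auto simp: mem_unit_cube push_def pull_def)
    show "pull (push y) = y" if "y \<in> unit_cube {..<n}" for y
      using that idx_h h_in by (auto simp: mem_unit_cube push_def pull_def)
    show "push (pull x) = x" if "x \<in> unit_cube I" for x
      using that h_idx idx_less by (auto simp: mem_unit_cube push_def pull_def)
  qed
  then show ?thesis
    unfolding n_def homeomorphic_def by blast
qed

theorem brouwer_unit_cube:
  fixes f :: "('a \<Rightarrow> real) \<Rightarrow> 'a \<Rightarrow> real"
  assumes "finite I" and "continuous_on (unit_cube I) f" and "f ` unit_cube I \<subseteq> unit_cube I"
  shows "\<exists>x\<in>unit_cube I. f x = x"
  using homeomorphic_fixpoint_property[OF unit_cube_homeomorphic_nat[OF assms(1)]]
    brouwer_unit_cube_nat assms(2,3) by (simp add: image_subset_iff_funcset)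

definition reference_entities :: "'b contract list \<Rightarrow> 'b set" where
  "reference_entities cs = {w. \<exists>u v c p. CDS u v w c p \<in> set cs}"

definition total_weight :: "'b contract list \<Rightarrow> 'b \<Rightarrow> real" where
  "total_weight cs v = sum_list (map (\<lambda>k. if debtor k = v then cweight k else 0) cs)"

definition payout_payment :: "'b contract list \<Rightarrow> ('b \<Rightarrow> real) \<Rightarrow> ('b \<Rightarrow> real) \<Rightarrow> 'b contract \<Rightarrow> real" where
  "payout_payment cs r y k =
     (let v = debtor k; \<rho> = prio k; L = bank_liab_prio cs v \<rho> r in
      if L = 0 then 0
      else liab k r * min 1 (max 0 ((y v - bank_liab_upto cs v (\<rho> - 1) r) / L)))"

definition payout_assets :: "('b \<Rightarrow> real) \<Rightarrow> 'b contract list \<Rightarrow> ('b \<Rightarrow> real) \<Rightarrow> ('b \<Rightarrow> real) \<Rightarrow> 'b \<Rightarrow> real" where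
  "payout_assets e cs r y v = e v + sum_list (map (\<lambda>k. if creditor k = v then payout_payment cs r y k else 0) cs)"

lemma payment_eq_payout_payment: "payment cs k r = payout_payment cs r (\<lambda>v. r v * bank_liab cs v r) k"
  by (simp add: payment_def payout_payment_def Let_def)

lemma assets_eq_payout_assets: "assets e cs v r = payout_assets e cs r (\<lambda>v. r v * bank_liab cs v r) v"
  unfolding assets_def payout_assets_def payment_eq_payout_payment ..

lemma liab_cong:
  assumes "\<And>w. w \<in> reference_entities cs \<Longrightarrow> r w = r' w" and "k \<in> set cs"
  shows "liab k r = liab k r'"
proof (cases k)
  case (CDS u v w c p)
  then have "w \<in> reference_entities cs"
    using assms(2) unfolding reference_entities_def by blast
  then show ?thesis
    using assms(1) CDS by simp
qed simp

lemma bank_liab_cong: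
  assumes "\<And>k. k \<in> set cs \<Longrightarrow> liab k r = liab k r'"
  shows "bank_liab cs v r = bank_liab cs v r'"
    and "bank_liab_prio cs v \<rho> r = bank_liab_prio cs v \<rho> r'"
    and "bank_liab_upto cs v \<rho> r = bank_liab_upto cs v \<rho> r'"
proof -
  show "bank_liab cs v r = bank_liab cs v r'"
    unfolding bank_liab_def using assms by (intro arg_cong[where f = sum_list] map_cong) auto
  show prio: "bank_liab_prio cs v \<rho> r = bank_liab_prio cs v \<rho> r'" for \<rho>
    unfolding bank_liab_prio_def using assms by (intro arg_cong[where f = sum_list] map_cong) auto
  show "bank_liab_upto cs v \<rho> r = bank_liab_upto cs v \<rho> r'"
    unfolding bank_liab_upto_def using prio by simp
qed

lemma payout_assets_cong:
  assumes "\<And>k. k \<in> set cs \<Longrightarrow> liab k r = liab k r'"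
    and "\<And>k. k \<in> set cs \<Longrightarrow> y (debtor k) = y' (debtor k)"
  shows "payout_assets e cs r y v = payout_assets e cs r' y' v"
proof -
  have "payout_payment cs r y k = payout_payment cs r' y' k" if "k \<in> set cs" for k
    using assms(1)[OF that] assms(2)[OF that] bank_liab_cong[OF assms(1)]
    by (simp add: payout_payment_def Let_def)
  then show ?thesis
    unfolding payout_assets_def by (intro arg_cong[where f = "\<lambda>xs. e v + sum_list xs"] map_cong) auto
qed

lemma continuous_on_sum_list_map:
  fixes f :: "'k \<Rightarrow> 'a::topological_space \<Rightarrow> 'b::topological_monoid_add"
  assumes "\<And>k. k \<in> set ks \<Longrightarrow> continuous_on S (f k)"
  shows "continuous_on S (\<lambda>x. sum_list (map (\<lambda>k. f k x) ks))"
  using assms by (induction ks) (auto intro!: continuous_on_add continuous_on_const)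

lemma continuous_on_if_const:
  "continuous_on S f \<Longrightarrow> continuous_on S (\<lambda>x. if P then f x else 0)"
  by (cases P) (simp_all add: continuous_on_const)

lemma continuous_on_liab: "continuous_on S (\<lambda>r. liab k r)"
  by (cases k) (auto intro!: continuous_intros continuous_on_subset[OF continuous_on_product_coordinates])

lemma continuous_on_bank_liab:
  shows "continuous_on S (\<lambda>r. bank_liab cs v r)"
    and "continuous_on S (\<lambda>r. bank_liab_prio cs v \<rho> r)"
    and "continuous_on S (\<lambda>r. bank_liab_upto cs v \<rho> r)"
proof -
  show "continuous_on S (\<lambda>r. bank_liab cs v r)"
    unfolding bank_liab_def
    by (intro continuous_on_sum_list_map continuous_on_if_const continuous_on_liab)
  show prio: "continuous_on S (\<lambda>r. bank_liab_prio cs v \<rho> r)" for \<rho>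
    unfolding bank_liab_prio_def
    by (intro continuous_on_sum_list_map continuous_on_if_const continuous_on_liab)
  show "continuous_on S (\<lambda>r. bank_liab_upto cs v \<rho> r)"
    unfolding bank_liab_upto_def by (intro continuous_on_sum prio)
qed

lemma continuous_on_proportional_share:
  fixes a L t :: "'a::topological_space \<Rightarrow> real"
  assumes cont: "continuous_on S a" "continuous_on S L" "continuous_on S t"
    and bounds: "\<And>x. x \<in> S \<Longrightarrow> 0 \<le> a x \<and> a x \<le> L x"
  shows "continuous_on S (\<lambda>x. if L x = 0 then 0 else a x * min 1 (max 0 (t x / L x)))"
    (is "continuous_on S ?f")
  unfolding continuous_on_def
proof
  fix x0 assume x0: "x0 \<in> S"
  have L_lim: "(L \<longlongrightarrow> L x0) (at x0 within S)"
    using cont(2) x0 by (simp add: continuous_on_def)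
  show "(?f \<longlongrightarrow> ?f x0) (at x0 within S)"
  proof (cases "L x0 = 0")
    case True
    \<comment> \<open>near a point without liabilities the share is squeezed between \<open>0\<close> and \<open>L\<close>\<close>
    have "norm (?f x) \<le> L x" if "x \<in> S" for x
    proof -
      define m where "m = min 1 (max 0 (t x / L x))"
      have "0 \<le> m" "m \<le> 1"
        unfolding m_def by auto
      then have "0 \<le> a x * m" "a x * m \<le> L x"
        using bounds[OF that] mult_left_le[of m "a x"] by auto
      then show ?thesis
        unfolding m_def[symmetric] by simp
    qed
    then have "eventually (\<lambda>x. norm (?f x) \<le> L x) (at x0 within S)"
      by (auto simp: eventually_at_filter)
    then have "(?f \<longlongrightarrow> 0) (at x0 within S)"
      by (rule Lim_null_comparison) (use L_lim True in simp)
    then show ?thesis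
      using True by simp
  next
    case False
    have lim: "((\<lambda>x. a x * min 1 (max 0 (t x / L x))) \<longlongrightarrow> ?f x0) (at x0 within S)"
      using cont x0 False unfolding continuous_on_def by (simp, intro tendsto_intros L_lim) auto
    have "eventually (\<lambda>x. a x * min 1 (max 0 (t x / L x)) = ?f x) (at x0 within S)"
      by (rule eventually_mono[OF tendsto_imp_eventually_ne[OF L_lim False]]) simp
    then show ?thesis
      by (rule Lim_transform_eventually[OF lim])
  qed
qed

lemma continuous_on_payout_payment:
  fixes y :: "('b \<Rightarrow> real) \<Rightarrow> 'b \<Rightarrow> real"
  assumes "continuous_on S (\<lambda>r. y r (debtor k))"
    and "\<And>r. r \<in> S \<Longrightarrow> 0 \<le> liab k r \<and> liab k r \<le> bank_liab_prio cs (debtor k) (prio k) r"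
  shows "continuous_on S (\<lambda>r. payout_payment cs r (y r) k)"
  unfolding payout_payment_def Let_def
  using assms by (intro continuous_on_proportional_share continuous_on_liab continuous_on_bank_liab
      continuous_on_diff)

lemma clearing_rate_min_div:
  fixes a l :: real
  assumes "0 \<le> a" and "0 < l"
  shows "0 \<le> min a l / l \<and> min a l / l \<le> 1 \<and>
    (l \<le> a \<longrightarrow> min a l / l = 1) \<and> (a < l \<longrightarrow> min a l / l = a / l)"
  using assms by (auto simp: min_def)

locale financial_system =
  fixes V :: "'b set" and e :: "'b \<Rightarrow> real" and P :: nat and cs :: "'b contract list"
  assumes wf: "wf_system V e P cs"
begin

lemma finite_banks: "finite V"
  and external_assets_nonneg: "\<And>v. v \<in> V \<Longrightarrow> 0 \<le> e v"
  and contract_banks: "\<And>k. k \<in> set cs \<Longrightarrow> debtor k \<in> V \<and> creditor k \<in> V"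
  and weight_pos: "\<And>k. k \<in> set cs \<Longrightarrow> 0 < cweight k"
  and reference_has_debt: "\<And>u v w c p. CDS u v w c p \<in> set cs \<Longrightarrow>
         w \<in> V \<and> (\<exists>v' c' p'. Debt w v' c' p' \<in> set cs \<and> 0 < c')"
  using wf unfolding wf_system_def by blast+

lemma reference_entities_subset: "reference_entities cs \<subseteq> V"
  using reference_has_debt unfolding reference_entities_def by blast

lemma liab_bounds:
  assumes "r \<in> unit_cube V" and "k \<in> set cs"
  shows "0 \<le> liab k r \<and> liab k r \<le> cweight k"
proof (cases k)
  case (CDS u v w c p)
  then have "0 \<le> r w \<and> r w \<le> 1"
    using assms reference_has_debt unfolding mem_unit_cube by blast
  moreover have "0 < c"
    using weight_pos[OF assms(2)] CDS by simp
  ultimately show ?thesis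
    using CDS by (simp add: mult_le_cancel_left1)
next
  case (Debt u v c p)
  then show ?thesis
    using weight_pos[OF assms(2)] by simp
qed

lemma bank_liab_nonneg: "r \<in> unit_cube V \<Longrightarrow> 0 \<le> bank_liab cs v r"
  unfolding bank_liab_def by (rule sum_list_nonneg) (auto simp: liab_bounds)

lemma bank_liab_le_total_weight: "r \<in> unit_cube V \<Longrightarrow> bank_liab cs v r \<le> total_weight cs v"
  unfolding bank_liab_def total_weight_def by (rule sum_list_mono) (auto simp: liab_bounds)

lemma liab_le_bank_liab_prio:
  assumes "r \<in> unit_cube V" and "k \<in> set cs"
  shows "liab k r \<le> bank_liab_prio cs (debtor k) (prio k) r"
  unfolding bank_liab_prio_def
  by (rule member_le_sum_list) (use assms liab_bounds in \<open>force+\<close>)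

lemma bank_liab_pos_reference:
  assumes "r \<in> unit_cube V" and "w \<in> reference_entities cs"
  shows "0 < bank_liab cs w r"
proof -
  obtain v c p where "Debt w v c p \<in> set cs" "0 < c"
    using assms(2) reference_has_debt unfolding reference_entities_def by blast
  moreover from this have "c \<le> bank_liab cs w r"
    unfolding bank_liab_def
    by (intro member_le_sum_list) (use assms(1) liab_bounds in \<open>force+\<close>)
  ultimately show ?thesis
    by linarith
qed

lemma payout_assets_nonneg:
  assumes "r \<in> unit_cube V" and "v \<in> V"
  shows "0 \<le> payout_assets e cs r y v"
proof -
  have "0 \<le> payout_payment cs r y k" if "k \<in> set cs" for k
    using liab_bounds[OF assms(1) that] by (simp add: payout_payment_def Let_def)
  then show ?thesis
    unfolding payout_assets_def
    by (intro add_nonneg_nonneg external_assets_nonneg[OF assms(2)] sum_list_nonneg) auto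
qed

lemma continuous_on_payout_assets:
  assumes "\<And>v. v \<in> V \<Longrightarrow> continuous_on (unit_cube V) (\<lambda>r. y r v)"
  shows "continuous_on (unit_cube V) (\<lambda>r. payout_assets e cs r (y r) v)"
  unfolding payout_assets_def
  using assms contract_banks liab_bounds liab_le_bank_liab_prio
  by (intro continuous_on_add continuous_on_const continuous_on_sum_list_map continuous_on_if_const
      continuous_on_payout_payment) auto

text \<open>On a reference entity \<open>w\<close>, \<open>x w\<close> is the
  recovery rate itself, so that CDS liabilities can be read off \<open>x\<close>; on any other bank \<open>v\<close>,
  \<open>x v\<close> is the payout as a fraction of \<open>total_weight cs v\<close>, which keeps the map continuous
  where \<open>v\<close> has no liabilities.  If \<open>v\<close> is the debtor of no contract, \<open>payout_scale x v = 0\<close>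
  and the division in \<open>clearing_update\<close> yields \<open>0\<close>.\<close>

definition payout_scale :: "('b \<Rightarrow> real) \<Rightarrow> 'b \<Rightarrow> real" where
  "payout_scale x v = (if v \<in> reference_entities cs then bank_liab cs v x else total_weight cs v)"

definition payout :: "('b \<Rightarrow> real) \<Rightarrow> 'b \<Rightarrow> real" where
  "payout x v = x v * payout_scale x v"

definition clearing_update :: "('b \<Rightarrow> real) \<Rightarrow> 'b \<Rightarrow> real" where
  "clearing_update x v = (if v \<in> V then
     min (payout_assets e cs x (payout x) v) (bank_liab cs v x) / payout_scale x v else 0)"

lemma bank_liab_le_payout_scale:
  "x \<in> unit_cube V \<Longrightarrow> bank_liab cs v x \<le> payout_scale x v"
  by (simp add: payout_scale_def bank_liab_le_total_weight)

lemma payout_scale_nonzero: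
  assumes "x \<in> unit_cube V" and "v \<in> reference_entities cs \<or> total_weight cs v \<noteq> 0"
  shows "payout_scale x v \<noteq> 0"
  using assms bank_liab_pos_reference[OF assms(1), of v] by (auto simp: payout_scale_def)

lemma clearing_update_in_unit_cube:
  assumes x: "x \<in> unit_cube V"
  shows "clearing_update x \<in> unit_cube V"
proof -
  have "0 \<le> clearing_update x v \<and> clearing_update x v \<le> 1" if "v \<in> V" for v
  proof -
    let ?m = "min (payout_assets e cs x (payout x) v) (bank_liab cs v x)"
    have "0 \<le> ?m" "?m \<le> payout_scale x v"
      using payout_assets_nonneg[OF x that, of "payout x"] bank_liab_nonneg[OF x, of v]
        bank_liab_le_payout_scale[OF x, of v]
      by linarith+
    then show ?thesis
      using that by (cases "payout_scale x v = 0") (auto simp: clearing_update_def divide_le_eq_1)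
  qed
  then show ?thesis
    by (simp add: mem_unit_cube clearing_update_def)
qed

lemma continuous_on_clearing_update: "continuous_on (unit_cube V) clearing_update"
proof (intro continuous_on_coordinatewise_then_product)
  fix v
  have coordinate: "continuous_on (unit_cube V) (\<lambda>x. x v)" for v
    by (rule continuous_on_subset[OF continuous_on_product_coordinates]) simp
  have scale: "continuous_on (unit_cube V) (\<lambda>x. payout_scale x v)" for v
    unfolding payout_scale_def
    by (cases "v \<in> reference_entities cs") (auto intro: continuous_on_bank_liab continuous_on_const)
  have min: "continuous_on (unit_cube V) (\<lambda>x. min (payout_assets e cs x (payout x) v) (bank_liab cs v x))"
    unfolding payout_def
    by (intro continuous_on_min continuous_on_bank_liab continuous_on_payout_assets
        continuous_on_mult coordinate scale)
  show "continuous_on (unit_cube V) (\<lambda>x. clearing_update x v)"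
  proof (cases "v \<in> V \<and> (v \<in> reference_entities cs \<or> total_weight cs v \<noteq> 0)")
    case True
    then have "payout_scale x v \<noteq> 0" if "x \<in> unit_cube V" for x
      using payout_scale_nonzero[OF that] by blast
    then show ?thesis
      using True unfolding clearing_update_def by (simp, intro continuous_on_divide min scale) auto
  next
    case False
    then have "clearing_update x v = 0" for x
      by (auto simp: clearing_update_def payout_scale_def)
    then show ?thesis
      by (simp add: continuous_on_const)
  qed
qed

lemma payout_at_fixpoint:
  assumes x: "x \<in> unit_cube V" and fixed: "clearing_update x = x" and v: "v \<in> V"
  shows "payout x v = min (payout_assets e cs x (payout x) v) (bank_liab cs v x)"
proof (cases "payout_scale x v = 0")
  case True
  then have "bank_liab cs v x = 0"
    using bank_liab_nonneg[OF x, of v] bank_liab_le_payout_scale[OF x, of v] by linarith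
  then show ?thesis
    using True payout_assets_nonneg[OF x v, of "payout x"] by (simp add: payout_def)
next
  case False
  have "x v = clearing_update x v"
    using fixed by simp
  then show ?thesis
    using False v by (simp add: payout_def clearing_update_def)
qed

definition clearing_recovery :: "('b \<Rightarrow> real) \<Rightarrow> 'b \<Rightarrow> real" where
  "clearing_recovery x v = (if 0 < bank_liab cs v x
     then min (payout_assets e cs x (payout x) v) (bank_liab cs v x) / bank_liab cs v x else 1)"

lemma clearing_recovery_reference:
  assumes x: "x \<in> unit_cube V" and fixed: "clearing_update x = x"
    and w: "w \<in> reference_entities cs"
  shows "clearing_recovery x w = x w"
proof -
  have "0 < bank_liab cs w x"
    by (rule bank_liab_pos_reference[OF x w])
  moreover have "x w = clearing_update x w"
    using fixed by simp
  ultimately show ?thesis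
    using w reference_entities_subset
    by (auto simp: clearing_recovery_def clearing_update_def payout_scale_def)
qed

lemma solution_of_fixpoint:
  assumes x: "x \<in> unit_cube V" and fixed: "clearing_update x = x"
  shows "is_solution V e cs (clearing_recovery x)"
proof -
  define r where "r = clearing_recovery x"
  define A where "A v = payout_assets e cs x (payout x) v" for v
  have "r w = x w" if "w \<in> reference_entities cs" for w
    unfolding r_def using clearing_recovery_reference[OF x fixed that] .
  then have liab_eq: "liab k r = liab k x" if "k \<in> set cs" for k
    using liab_cong that by blast
  then have bank_liab_eq: "bank_liab cs v r = bank_liab cs v x" for v
    by (rule bank_liab_cong(1))
  have paid: "r v * bank_liab cs v r = payout x v" if v: "v \<in> V" for v
    unfolding bank_liab_eq payout_at_fixpoint[OF x fixed v]
    using bank_liab_nonneg[OF x, of v] payout_assets_nonneg[OF x v, of "payout x"]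
    by (auto simp: r_def clearing_recovery_def)
  have assets_eq: "assets e cs v r = A v" for v
    unfolding assets_eq_payout_assets A_def
    using liab_eq paid contract_banks by (intro payout_assets_cong) auto
  have "0 \<le> r v \<and> r v \<le> 1 \<and> (bank_liab cs v x \<le> A v \<longrightarrow> r v = 1) \<and>
      (A v < bank_liab cs v x \<longrightarrow> r v = A v / bank_liab cs v x)" if v: "v \<in> V" for v
  proof (cases "0 < bank_liab cs v x")
    case True
    then have "r v = min (A v) (bank_liab cs v x) / bank_liab cs v x"
      by (simp add: r_def clearing_recovery_def A_def)
    then show ?thesis
      using clearing_rate_min_div[OF payout_assets_nonneg[OF x v] True] by (simp add: A_def)
  next
    case False
    then show ?thesis
      using bank_liab_nonneg[OF x, of v] payout_assets_nonneg[OF x v, of "payout x"]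
      by (simp add: r_def clearing_recovery_def A_def)
  qed
  then show ?thesis
    unfolding r_def[symmetric] is_solution_def assets_eq bank_liab_eq by (simp add: not_le)
qed

theorem exists_solution: "\<exists>r. is_solution V e cs r"
proof -
  obtain x where "x \<in> unit_cube V" "clearing_update x = x"
    using brouwer_unit_cube[OF finite_banks continuous_on_clearing_update]
      clearing_update_in_unit_cube by blast
  then show ?thesis
    using solution_of_fixpoint by blast
qed

end

theorem mainTheorem1:
  fixes V :: "'b set" and e :: "'b \<Rightarrow> real" and P :: nat and cs :: "'b contract list"
  assumes "wf_system V e P cs"
  shows "\<exists>r. is_solution V e cs r"
  using financial_system.exists_solution[OF financial_system.intro[OF assms]] .

end
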